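(* Let $m\ge1$, $\alpha>0$, let $A$ be a finite set of bilinear maps $\Phi:\mathbb{R}^m\times\mathbb{R}^m\to\mathbb{R}^m$ each of whose coordinates is a bilinear form with nonnegative coefficients, and let $\mathbf v\in\mathbb{R}_{\ge0}^m$. Let $F\subseteq\mathbb{R}^m\times\mathbb{N}$ be the smallest set such that $(\mathbf v,1)\in F$ and, whenever $(\mathbf w,i),(\mathbf u,j)\in F$ and $\Phi\in A$, also $(\Phi(\mathbf w,\mathbf u),i+j)\in F$. Suppose there is a bounded set $X\subseteq\mathbb{R}_{\ge0}^m$ such that $\frac{1}{\alpha}\mathbf v\in\operatorname{conv}_\le(X)$ and, for all $\mathbf x,\mathbf x'\in X$ and all $\Phi\in A$, $\Phi(\mathbf x,\mathbf x')\in\operatorname{conv}_\le(X)$. Then for every $\mathbf p\in\mathbb{R}_{\ge0}^m$ and every integer $n$, $$\max\{|\mathbf p\cdot\mathbf u| : (\mathbf u,n)\in F\}\le \alpha^n\max_{\mathbf x\in X}|\mathbf p\cdot\mathbf x| .$$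
   Context: For vectors $\mathbf x,\mathbf x'\in\mathbb{R}^m$, $\mathbf x\le\mathbf x'$ means coordinatewise inequality. For $X\subseteq\mathbb{R}_{\ge0}^m$, $\operatorname{conv}(X)$ is the convex hull of $X$ and $\operatorname{conv}_\le(X)=\{\mathbf x\in\mathbb{R}_{\ge0}^m:\ \exists\,\mathbf x'\in\operatorname{conv}(X),\ \mathbf x\le \mathbf x'\}$. *)

theory Defs
  imports "HOL-Analysis.Analysis"
begin

definition nonneg_orthant :: "(real ^ 'm) set" where
  "nonneg_orthant = {x. \<forall>i. 0 \<le> x $ i}"

definition conv_le :: "(real ^ 'm) set \<Rightarrow> (real ^ 'm) set" where
  "conv_le X = {x \<in> nonneg_orthant. \<exists>x' \<in> convex hull X. \<forall>i. x $ i \<le> x' $ i}"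

definition nonneg_bilinear :: "(real ^ 'm \<Rightarrow> real ^ 'm \<Rightarrow> real ^ 'm) \<Rightarrow> bool" where
  "nonneg_bilinear \<Phi> \<longleftrightarrow>
     (\<exists>c :: 'm \<Rightarrow> 'm \<Rightarrow> 'm \<Rightarrow> real. (\<forall>i j k. 0 \<le> c i j k) \<and>
        (\<forall>x y i. \<Phi> x y $ i = (\<Sum>j\<in>UNIV. \<Sum>k\<in>UNIV. c i j k * x $ j * y $ k)))"

inductive_set genF :: "(real ^ 'm \<Rightarrow> real ^ 'm \<Rightarrow> real ^ 'm) set \<Rightarrow> real ^ 'm
                       \<Rightarrow> ((real ^ 'm) \<times> nat) set"
  for A :: "(real ^ 'm \<Rightarrow> real ^ 'm \<Rightarrow> real ^ 'm) set" and v :: "real ^ 'm" where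
  base: "(v, 1) \<in> genF A v"
| step: "(w, i) \<in> genF A v \<Longrightarrow> (u, j) \<in> genF A v \<Longrightarrow> \<Phi> \<in> A
          \<Longrightarrow> (\<Phi> w u, i + j) \<in> genF A v"

end

theory Submission
  imports Defs
begin

text \<open>Dividing an element of degree n by \<open>\<alpha>^n\<close> commutes with the bilinear maps, so all the
  rescaled elements \<open>\<alpha>^-n u\<close> of F lie in \<open>conv\<^sub>\<le>(X)\<close>: this set contains \<open>v/\<alpha>\<close> and is closed
  under every \<open>\<Phi> \<in> A\<close>, because a bilinear map sends \<open>conv X \<times> conv X\<close> into any convex set
  containing \<open>\<Phi>(X \<times> X)\<close>, and nonnegative coefficients make \<open>\<Phi>\<close> monotone on the orthant.
  A nonnegative functional p is bounded on \<open>conv\<^sub>\<le>(X)\<close> by its supremum on X.\<close>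

lemma nonneg_bilinear_imp_bilinear:
  assumes "nonneg_bilinear \<Phi>"
  shows "bilinear \<Phi>"
proof -
  obtain c where c: "\<And>x y i. \<Phi> x y $ i = (\<Sum>j\<in>UNIV. \<Sum>k\<in>UNIV. c i j k * x $ j * y $ k)"
    using assms unfolding nonneg_bilinear_def by blast
  show ?thesis
    unfolding bilinear_def
    by (auto intro!: linearI
        simp: vec_eq_iff c sum_distrib_left sum.distrib[symmetric] algebra_simps)
qed

lemma nonneg_bilinear_mono:
  assumes "nonneg_bilinear \<Phi>"
    and "\<And>j. 0 \<le> a $ j" "\<And>j. a $ j \<le> a' $ j"
    and "\<And>k. 0 \<le> b $ k" "\<And>k. b $ k \<le> b' $ k"
  shows "0 \<le> \<Phi> a b $ i" "\<Phi> a b $ i \<le> \<Phi> a' b' $ i"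
proof -
  obtain c where c0: "\<And>i j k. 0 \<le> c i j k" and
    c: "\<And>x y i. \<Phi> x y $ i = (\<Sum>j\<in>UNIV. \<Sum>k\<in>UNIV. c i j k * x $ j * y $ k)"
    using assms(1) unfolding nonneg_bilinear_def by blast
  show "0 \<le> \<Phi> a b $ i"
    using c0 assms(2,4) by (simp add: c sum_nonneg)
  have "c i j k * a $ j * b $ k \<le> c i j k * a' $ j * b' $ k" for j k
  proof -
    have "a $ j * b $ k \<le> a' $ j * b' $ k"
      using assms(2-5) by (meson mult_mono order_trans)
    then show ?thesis
      using c0[of i j k] by (simp add: mult.assoc mult_left_mono)
  qed
  then show "\<Phi> a b $ i \<le> \<Phi> a' b' $ i"
    unfolding c by (intro sum_mono)
qed

lemma bilinear_convex_hull_mem: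
  assumes "bilinear \<Phi>" "convex C" "\<And>x y. x \<in> X \<Longrightarrow> y \<in> X \<Longrightarrow> \<Phi> x y \<in> C"
    and "a \<in> convex hull X" "b \<in> convex hull X"
  shows "\<Phi> a b \<in> C"
proof -
  have "convex hull X \<subseteq> \<Phi> x -` C" if "x \<in> X" for x
    using assms(1-3) that
    by (intro hull_minimal convex_linear_vimage) (auto simp: bilinear_def)
  then have "convex hull X \<subseteq> (\<lambda>x. \<Phi> x b) -` C"
    using assms(1,2,5)
    by (intro hull_minimal convex_linear_vimage) (auto simp: bilinear_def)
  then show ?thesis
    using assms(4) by auto
qed

definition downward_closure :: "(real ^ 'm) set \<Rightarrow> (real ^ 'm) set" where
  "downward_closure S = {z. \<exists>z'\<in>S. \<forall>i. z $ i \<le> z' $ i}"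

lemma convex_downward_closure:
  assumes "convex S"
  shows "convex (downward_closure S)"
proof (rule convexI)
  fix x y and u v :: real
  assume x: "x \<in> downward_closure S" and y: "y \<in> downward_closure S"
    and uv: "0 \<le> u" "0 \<le> v" "u + v = 1"
  obtain x' y' where x'y': "x' \<in> S" "\<And>i. x $ i \<le> x' $ i" "y' \<in> S" "\<And>i. y $ i \<le> y' $ i"
    using x y unfolding downward_closure_def by blast
  have "u *\<^sub>R x' + v *\<^sub>R y' \<in> S"
    using assms x'y'(1,3) uv unfolding convex_def by blast
  moreover have "(u *\<^sub>R x + v *\<^sub>R y) $ i \<le> (u *\<^sub>R x' + v *\<^sub>R y') $ i" for i
    using x'y'(2,4) uv by (auto intro!: add_mono mult_left_mono)
  ultimately show "u *\<^sub>R x + v *\<^sub>R y \<in> downward_closure S"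
    unfolding downward_closure_def by blast
qed

lemma conv_le_eq: "conv_le X = nonneg_orthant \<inter> downward_closure (convex hull X)"
  unfolding conv_le_def downward_closure_def by blast

lemma conv_le_closed_nonneg_bilinear:
  assumes "nonneg_bilinear \<Phi>" "\<And>x x'. x \<in> X \<Longrightarrow> x' \<in> X \<Longrightarrow> \<Phi> x x' \<in> conv_le X"
    and "a \<in> conv_le X" "b \<in> conv_le X"
  shows "\<Phi> a b \<in> conv_le X"
proof -
  obtain a' where a': "a' \<in> convex hull X" "\<And>i. a $ i \<le> a' $ i" "\<And>i. 0 \<le> a $ i"
    using assms(3) unfolding conv_le_def nonneg_orthant_def by blast
  obtain b' where b': "b' \<in> convex hull X" "\<And>i. b $ i \<le> b' $ i" "\<And>i. 0 \<le> b $ i"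
    using assms(4) unfolding conv_le_def nonneg_orthant_def by blast
  have "\<Phi> a' b' \<in> downward_closure (convex hull X)"
  proof (rule bilinear_convex_hull_mem[OF _ _ _ a'(1) b'(1)])
    show "bilinear \<Phi>" using assms(1) by (rule nonneg_bilinear_imp_bilinear)
    show "convex (downward_closure (convex hull X))"
      by (intro convex_downward_closure convex_convex_hull)
    show "\<Phi> x y \<in> downward_closure (convex hull X)" if "x \<in> X" "y \<in> X" for x y
      using assms(2)[OF that] by (simp add: conv_le_eq)
  qed
  then obtain z where z: "z \<in> convex hull X" "\<And>i. \<Phi> a' b' $ i \<le> z $ i"
    unfolding downward_closure_def by blast
  show ?thesis
    unfolding conv_le_def nonneg_orthant_def
    using nonneg_bilinear_mono[OF assms(1) a'(3,2) b'(3,2)] z by (blast intro: order_trans)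
qed

lemma genF_scaled_in_conv_le:
  assumes "\<forall>\<Phi>\<in>A. nonneg_bilinear \<Phi>"
    and "(1 / \<alpha>) *\<^sub>R v \<in> conv_le X"
    and "\<forall>x\<in>X. \<forall>x'\<in>X. \<forall>\<Phi>\<in>A. \<Phi> x x' \<in> conv_le X"
    and "(u, n) \<in> genF A v"
  shows "(1 / \<alpha> ^ n) *\<^sub>R u \<in> conv_le X"
  using assms(4)
proof (induction rule: genF.induct)
  case base
  then show ?case using assms(2) by simp
next
  case (step w i u j \<Phi>)
  have \<Phi>: "nonneg_bilinear \<Phi>"
    using assms(1) step.hyps(3) by blast
  have "(1 / \<alpha> ^ (i + j)) *\<^sub>R \<Phi> w u = \<Phi> ((1 / \<alpha> ^ i) *\<^sub>R w) ((1 / \<alpha> ^ j) *\<^sub>R u)"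
    using nonneg_bilinear_imp_bilinear[OF \<Phi>]
    by (simp add: bilinear_lmul bilinear_rmul power_add)
  also have "\<dots> \<in> conv_le X"
    using assms(3) step.hyps(3) by (intro conv_le_closed_nonneg_bilinear[OF \<Phi> _ step.IH]) auto
  finally show ?case .
qed

lemma inner_nonneg_orthant:
  assumes "p \<in> nonneg_orthant" "y \<in> nonneg_orthant"
  shows "0 \<le> p \<bullet> y"
  using assms unfolding nonneg_orthant_def inner_vec_def by (auto intro!: sum_nonneg)

lemma bounded_imp_bdd_above_abs_inner:
  fixes X :: "'a::real_inner set"
  assumes "bounded X"
  shows "bdd_above ((\<lambda>x. \<bar>p \<bullet> x\<bar>) ` X)"
proof -
  obtain B where "\<And>x. x \<in> X \<Longrightarrow> norm x \<le> B"
    using assms unfolding bounded_iff by blast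
  then have "\<bar>p \<bullet> x\<bar> \<le> norm p * B" if "x \<in> X" for x
    using that Cauchy_Schwarz_ineq2[of p x] by (meson mult_left_mono norm_ge_zero order_trans)
  then show ?thesis
    by (rule bdd_aboveI2)
qed

lemma inner_conv_le_le_SUP:
  assumes "bounded X" "p \<in> nonneg_orthant" "y \<in> conv_le X"
  shows "p \<bullet> y \<le> (SUP x\<in>X. \<bar>p \<bullet> x\<bar>)"
proof -
  obtain y' where y': "y' \<in> convex hull X" "\<And>i. y $ i \<le> y' $ i"
    using assms(3) unfolding conv_le_def by blast
  have "p \<bullet> y \<le> p \<bullet> y'"
    using assms(2) y'(2) unfolding nonneg_orthant_def inner_vec_def
    by (auto intro!: sum_mono mult_left_mono)
  moreover have "bdd_above ((\<lambda>x. \<bar>p \<bullet> x\<bar>) ` X)"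
    using assms(1) by (rule bounded_imp_bdd_above_abs_inner)
  then have "convex hull X \<subseteq> {z. p \<bullet> z \<le> (SUP x\<in>X. \<bar>p \<bullet> x\<bar>)}"
    by (intro hull_minimal convex_halfspace_le) (auto intro: cSUP_upper2)
  ultimately show ?thesis
    using y'(1) by auto
qed

theorem mainTheorem2:
  fixes A :: "(real ^ 'm \<Rightarrow> real ^ 'm \<Rightarrow> real ^ 'm) set"
    and v :: "real ^ 'm" and \<alpha> :: real and X :: "(real ^ 'm) set"
  assumes "\<alpha> > 0"
    and "finite A"
    and "\<forall>\<Phi>\<in>A. nonneg_bilinear \<Phi>"
    and "v \<in> nonneg_orthant"
    and "bounded X" and "X \<subseteq> nonneg_orthant"
    and "(1 / \<alpha>) *\<^sub>R v \<in> conv_le X"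
    and "\<forall>x\<in>X. \<forall>x'\<in>X. \<forall>\<Phi>\<in>A. \<Phi> x x' \<in> conv_le X"
  shows "\<forall>p \<in> nonneg_orthant. \<forall>n u. (u, n) \<in> genF A v \<longrightarrow>
           \<bar>p \<bullet> u\<bar> \<le> \<alpha> ^ n * (SUP x\<in>X. \<bar>p \<bullet> x\<bar>)"
proof (intro ballI allI impI)
  fix p :: "real ^ 'm" and n u
  assume p: "p \<in> nonneg_orthant" and un: "(u, n) \<in> genF A v"
  define c where "c = (1 / \<alpha> ^ n) *\<^sub>R u"
  have c: "c \<in> conv_le X"
    unfolding c_def using genF_scaled_in_conv_le[OF assms(3,7,8) un] .
  have "u = \<alpha> ^ n *\<^sub>R c"
    using assms(1) by (simp add: c_def)
  moreover have "0 \<le> p \<bullet> c"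
    using p c by (intro inner_nonneg_orthant) (auto simp: conv_le_def)
  ultimately have "\<bar>p \<bullet> u\<bar> = \<alpha> ^ n * (p \<bullet> c)"
    using assms(1) by simp
  also have "\<dots> \<le> \<alpha> ^ n * (SUP x\<in>X. \<bar>p \<bullet> x\<bar>)"
    using inner_conv_le_le_SUP[OF assms(5) p c] assms(1) by (simp add: mult_left_mono)
  finally show "\<bar>p \<bullet> u\<bar> \<le> \<alpha> ^ n * (SUP x\<in>X. \<bar>p \<bullet> x\<bar>)" .
qed

end
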